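(* Let $X$ be an infinite dimensional real Banach space, and let $\psi$ be one of the cardinal functions $s$, $hL$, $hd$. Then $\psi(X^* )=\psi(B_{X^*})$, where $X^*$ and the closed dual unit ball $B_{X^*}$ carry the weak$^*$ topology.
   Context: For a topological space $Z$: $s(Z)=\sup\{|D|: D\subseteq Z \text{ is discrete in its subspace topology}\}$ (spread); $hd(Z)=\sup\{d(Y):Y\subseteq Z\}$ where $d(Y)$ is the least cardinality of a dense subset of $Y$ (hereditary density); $hL(Z)=\sup\{L(Y):Y\subseteq Z\}$ where $L(Y)$ is the least cardinal $\kappa$ such that every open cover of $Y$ has a subcover of cardinality at most $\kappa$ (hereditary Lindelöf degree). The weak$^*$ topology on $X^*$ is generated by the sets $\{x^*: x^*(x)\in I\}$, $x\in X$, $I\subseteq\mathbb R$ an open interval. *)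

theory Defs
  imports "HOL-Analysis.Analysis"
begin

definition infinite_dimensional :: "'a::real_vector itself \<Rightarrow> bool" where
  "infinite_dimensional _ \<longleftrightarrow> \<not> (\<exists>S::'a set. finite S \<and> span S = UNIV)"

definition weak_star_topology :: "('a::real_normed_vector \<Rightarrow>\<^sub>L real) topology" where
  "weak_star_topology = topology_generated_by
     {{f. blinfun_apply f x \<in> {a<..<b}} | x a b. True}"

definition dual_ball :: "('a::real_normed_vector \<Rightarrow>\<^sub>L real) set" where
  "dual_ball = {f. norm f \<le> 1}"

definition discrete_in :: "'x topology \<Rightarrow> 'x set \<Rightarrow> bool" where
  "discrete_in T D \<longleftrightarrow> D \<subseteq> topspace T \<and>
     (\<forall>x\<in>D. openin (subtopology T D) {x})"

text \<open>Cardinal-function bounds: psi(T) \<le> |K| for a cardinal given as |K|.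
  psi(T) is a supremum, so psi(T) \<le> kappa iff every member of the family is \<le> kappa.\<close>

definition spread_le :: "'x topology \<Rightarrow> 'b set \<Rightarrow> bool" where
  "spread_le T K \<longleftrightarrow> (\<forall>D. discrete_in T D \<longrightarrow> (card_of D, card_of K) \<in> ordLeq)"

definition density_le :: "'x topology \<Rightarrow> 'b set \<Rightarrow> bool" where
  "density_le T K \<longleftrightarrow> (\<exists>D. D \<subseteq> topspace T \<and> T closure_of D = topspace T
       \<and> (card_of D, card_of K) \<in> ordLeq)"

definition hd_le :: "'x topology \<Rightarrow> 'b set \<Rightarrow> bool" where
  "hd_le T K \<longleftrightarrow> (\<forall>Y. Y \<subseteq> topspace T \<longrightarrow> density_le (subtopology T Y) K)"

definition lindelof_le :: "'x topology \<Rightarrow> 'b set \<Rightarrow> bool" where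
  "lindelof_le T K \<longleftrightarrow> (\<forall>\<U>. (\<forall>U\<in>\<U>. openin T U) \<and> topspace T \<subseteq> \<Union>\<U> \<longrightarrow>
       (\<exists>\<V>. \<V> \<subseteq> \<U> \<and> topspace T \<subseteq> \<Union>\<V> \<and> (card_of \<V>, card_of K) \<in> ordLeq))"

definition hL_le :: "'x topology \<Rightarrow> 'b set \<Rightarrow> bool" where
  "hL_le T K \<longleftrightarrow> (\<forall>Y. Y \<subseteq> topspace T \<longrightarrow> lindelof_le (subtopology T Y) K)"

end

theory Submission
  imports Defs
begin

unbundle cardinal_syntax

text \<open>Passing to a subspace does not increase spread, hereditary density or hereditary
  Lindelof degree, so the bounds transfer from the dual space to its unit ball. Conversely the
  dual space is the union of the balls \<open>(n+1)\<cdot>B\<close>, and multiplication by \<open>n+1\<close> is a weak*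
  continuous bijection of \<open>B\<close> onto \<open>(n+1)\<cdot>B\<close>. Continuous surjections do not increase
  density or Lindelof degree, continuous bijections do not increase spread, and all three
  cardinal functions are countably additive as long as the bound is infinite. Finite bounds hold
  on neither side: a nonzero functional \<open>f\<close> yields the infinite discrete set of the \<open>f/(k+1)\<close>
  in the ball, and if there is no nonzero functional the ball is the whole dual.\<close>

lemma spread_le_subtopology: "spread_le X K \<Longrightarrow> spread_le (subtopology X S) K"
  unfolding spread_le_def discrete_in_def by (auto simp: subtopology_subtopology Int_absorb1)

lemma hd_le_subtopology: "hd_le X K \<Longrightarrow> hd_le (subtopology X S) K"
  unfolding hd_le_def by (auto simp: subtopology_subtopology Int_absorb1)

lemma hL_le_subtopology: "hL_le X K \<Longrightarrow> hL_le (subtopology X S) K"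
  unfolding hL_le_def by (auto simp: subtopology_subtopology Int_absorb1)

lemma hd_le_imp_spread_le: "hd_le X K \<Longrightarrow> spread_le X K"
  unfolding spread_le_def
proof (intro allI impI)
  fix D assume "hd_le X K" and "discrete_in X D"
  then have DX: "D \<subseteq> topspace X" and iso: "\<And>x. x \<in> D \<Longrightarrow> openin (subtopology X D) {x}"
    unfolding discrete_in_def by auto
  have "density_le (subtopology X D) K"
    using \<open>hd_le X K\<close> DX unfolding hd_le_def by blast
  moreover have "topspace (subtopology X D) = D" using DX by auto
  ultimately obtain E where E: "E \<subseteq> D" "subtopology X D closure_of E = D" "|E| \<le>o |K|"
    unfolding density_le_def by auto
  have "D \<subseteq> E"
  proof
    fix x assume "x \<in> D"
    then have "x \<in> subtopology X D closure_of E" using E(2) by simp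
    then show "x \<in> E" using iso[OF \<open>x \<in> D\<close>] unfolding in_closure_of by blast
  qed
  then show "|D| \<le>o |K|" using E by simp
qed

lemma hL_le_imp_spread_le: "hL_le X K \<Longrightarrow> spread_le X K"
  unfolding spread_le_def
proof (intro allI impI)
  fix D assume "hL_le X K" and "discrete_in X D"
  then have DX: "D \<subseteq> topspace X" and iso: "\<And>x. x \<in> D \<Longrightarrow> openin (subtopology X D) {x}"
    unfolding discrete_in_def by auto
  have "lindelof_le (subtopology X D) K"
    using \<open>hL_le X K\<close> DX unfolding hL_le_def by blast
  moreover have "topspace (subtopology X D) \<subseteq> \<Union>((\<lambda>x. {x}) ` D)" by auto
  ultimately obtain \<V> where \<V>: "\<V> \<subseteq> (\<lambda>x. {x}) ` D" "D \<subseteq> \<Union>\<V>" "|\<V>| \<le>o |K|"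
    using iso DX unfolding lindelof_le_def by (auto simp: Int_absorb1 dest!: spec[of _ "(\<lambda>x. {x}) ` D"])
  have "\<Union>\<V> = D" using \<V>(1,2) by blast
  moreover have "|\<Union>\<V>| \<le>o |\<V>|"
    using \<V>(1) by (subst card_of_ordLeq[symmetric]) (auto intro!: exI[of _ "\<lambda>x. {x}"] inj_onI)
  ultimately show "|D| \<le>o |K|" using \<V>(3) ordLeq_transitive by blast
qed

lemma density_le_continuous_image:
  assumes f: "continuous_map X Y f" "f ` topspace X = topspace Y" and "density_le X K"
  shows "density_le Y K"
proof -
  obtain D where D: "D \<subseteq> topspace X" "X closure_of D = topspace X" "|D| \<le>o |K|"
    using \<open>density_le X K\<close> unfolding density_le_def by blast
  have "f ` (X closure_of D) \<subseteq> Y closure_of f ` D"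
    by (rule continuous_map_image_closure_subset[OF f(1)])
  then have "Y closure_of f ` D = topspace Y"
    using D(2) f(2) closure_of_subset_topspace by (metis subset_antisym)
  moreover have "f ` D \<subseteq> topspace Y" using D(1) f(2) by blast
  moreover have "|f ` D| \<le>o |K|" using ordLeq_transitive[OF card_of_image D(3)] .
  ultimately show ?thesis unfolding density_le_def by (intro exI[of _ "f ` D"]) simp
qed

lemma lindelof_le_continuous_image:
  assumes f: "continuous_map X Y f" "f ` topspace X = topspace Y" and "lindelof_le X K"
  shows "lindelof_le Y K"
  unfolding lindelof_le_def
proof (intro allI impI, elim conjE)
  fix \<U> assume open_\<U>: "\<forall>U\<in>\<U>. openin Y U" and cover_\<U>: "topspace Y \<subseteq> \<Union>\<U>"
  let ?pull = "\<lambda>U. {x \<in> topspace X. f x \<in> U}"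
  have "\<forall>W\<in>?pull ` \<U>. openin X W" using open_\<U> openin_continuous_map_preimage[OF f(1)] by blast
  moreover have "topspace X \<subseteq> \<Union>(?pull ` \<U>)" using cover_\<U> f(2) by blast
  ultimately obtain \<W> where \<W>: "\<W> \<subseteq> ?pull ` \<U>" "topspace X \<subseteq> \<Union>\<W>" "|\<W>| \<le>o |K|"
    using \<open>lindelof_le X K\<close> unfolding lindelof_le_def by meson
  obtain \<V> where \<V>: "\<V> \<subseteq> \<U>" "inj_on ?pull \<V>" "\<W> = ?pull ` \<V>"
    using subset_image_inj[THEN iffD1, OF \<W>(1)] by blast
  have "topspace Y \<subseteq> \<Union>\<V>"
  proof
    fix y assume "y \<in> topspace Y"
    then obtain x where "x \<in> topspace X" "y = f x" using f(2) by blast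
    then show "y \<in> \<Union>\<V>" using \<W>(2) \<V>(3) by blast
  qed
  moreover have "|\<V>| \<le>o |\<W>|"
    unfolding card_of_ordLeq[symmetric] using \<V>(2,3) by (intro exI[of _ ?pull]) simp
  then have "|\<V>| \<le>o |K|" using \<W>(3) by (rule ordLeq_transitive)
  ultimately show "\<exists>\<V>. \<V> \<subseteq> \<U> \<and> topspace Y \<subseteq> \<Union>\<V> \<and> |\<V>| \<le>o |K|"
    using \<V>(1) by (intro exI[of _ \<V>] conjI) assumption+
qed

lemma continuous_map_restrict_preimage:
  assumes "continuous_map X Y f" "f ` topspace X = topspace Y" "S \<subseteq> topspace Y"
  shows "continuous_map (subtopology X {x \<in> topspace X. f x \<in> S}) (subtopology Y S) f"
    and "f ` topspace (subtopology X {x \<in> topspace X. f x \<in> S}) = topspace (subtopology Y S)"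
  using assms by (auto simp: continuous_map_in_subtopology continuous_map_from_subtopology)

lemma hd_le_continuous_image:
  assumes f: "continuous_map X Y f" "f ` topspace X = topspace Y" and "hd_le X K"
  shows "hd_le Y K"
  unfolding hd_le_def
proof (intro allI impI)
  fix S assume S: "S \<subseteq> topspace Y"
  have "density_le (subtopology X {x \<in> topspace X. f x \<in> S}) K"
    using \<open>hd_le X K\<close> unfolding hd_le_def by simp
  then show "density_le (subtopology Y S) K"
    by (rule density_le_continuous_image[OF continuous_map_restrict_preimage[OF f S]])
qed

lemma hL_le_continuous_image:
  assumes f: "continuous_map X Y f" "f ` topspace X = topspace Y" and "hL_le X K"
  shows "hL_le Y K"
  unfolding hL_le_def
proof (intro allI impI)
  fix S assume S: "S \<subseteq> topspace Y"
  have "lindelof_le (subtopology X {x \<in> topspace X. f x \<in> S}) K"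
    using \<open>hL_le X K\<close> unfolding hL_le_def by simp
  then show "lindelof_le (subtopology Y S) K"
    by (rule lindelof_le_continuous_image[OF continuous_map_restrict_preimage[OF f S]])
qed

lemma spread_le_continuous_bijective_image:
  assumes f: "continuous_map X Y f" "inj_on f (topspace X)" "f ` topspace X = topspace Y"
    and "spread_le X K"
  shows "spread_le Y K"
  unfolding spread_le_def
proof (intro allI impI)
  fix D assume "discrete_in Y D"
  then have DY: "D \<subseteq> topspace Y" and iso: "\<And>y. y \<in> D \<Longrightarrow> openin (subtopology Y D) {y}"
    unfolding discrete_in_def by auto
  define E where "E = {x \<in> topspace X. f x \<in> D}"
  have fE: "continuous_map (subtopology X E) (subtopology Y D) f"
    unfolding E_def by (rule continuous_map_restrict_preimage(1)[OF f(1,3) DY])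
  have "openin (subtopology X E) {x}" if "x \<in> E" for x
  proof -
    have "f x \<in> D" using that by (simp add: E_def)
    then have "openin (subtopology X E) {x' \<in> topspace (subtopology X E). f x' \<in> {f x}}"
      using openin_continuous_map_preimage[OF fE iso] by blast
    moreover have "{x' \<in> topspace (subtopology X E). f x' \<in> {f x}} = {x}"
      using that f(2) by (auto simp: E_def inj_on_def)
    ultimately show ?thesis by simp
  qed
  then have "discrete_in X E" unfolding discrete_in_def E_def by auto
  then have "|E| \<le>o |K|" using \<open>spread_le X K\<close> unfolding spread_le_def by auto
  moreover have "f ` E = D" using DY f(3) by (auto simp: E_def)
  ultimately show "|D| \<le>o |K|" using ordLeq_transitive[OF card_of_image[of f E]] by simp
qed

lemma card_of_UN_nat_ordLeq_infinite:
  assumes "infinite K" and "\<And>n::nat. |A n| \<le>o |K|"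
  shows "|\<Union>n. A n| \<le>o |K|"
  using card_of_UNION_ordLeq_infinite[of K UNIV A] assms infinite_iff_card_of_nat by blast

lemma discrete_in_subtopology_Int:
  assumes "discrete_in X D"
  shows "discrete_in (subtopology X S) (D \<inter> S)"
  unfolding discrete_in_def
proof (intro conjI ballI)
  show "D \<inter> S \<subseteq> topspace (subtopology X S)"
    using assms unfolding discrete_in_def by auto
next
  fix x assume x: "x \<in> D \<inter> S"
  then obtain U where "openin X U" "{x} = U \<inter> D"
    using assms unfolding discrete_in_def openin_subtopology by blast
  then have "openin (subtopology X (D \<inter> S)) {x}"
    unfolding openin_subtopology using x by blast
  then show "openin (subtopology (subtopology X S) (D \<inter> S)) {x}"
    by (simp add: subtopology_subtopology Int_absorb1)
qed

lemma spread_le_countable_cover: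
  assumes "infinite K" and cover: "topspace X \<subseteq> (\<Union>n::nat. S n)"
    and spread: "\<And>n. spread_le (subtopology X (S n)) K"
  shows "spread_le X K"
  unfolding spread_le_def
proof (intro allI impI)
  fix D assume D: "discrete_in X D"
  have "|D \<inter> S n| \<le>o |K|" for n
    using spread[of n, unfolded spread_le_def] discrete_in_subtopology_Int[OF D] by simp
  then have "|\<Union>n. D \<inter> S n| \<le>o |K|"
    by (rule card_of_UN_nat_ordLeq_infinite[OF \<open>infinite K\<close>])
  moreover have "(\<Union>n. D \<inter> S n) = D"
    using D cover unfolding discrete_in_def by blast
  ultimately show "|D| \<le>o |K|" by simp
qed

lemma density_le_countable_cover:
  assumes "infinite K" and cover: "topspace X \<subseteq> (\<Union>n::nat. S n)"
    and density: "\<And>n. density_le (subtopology X (S n)) K"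
  shows "density_le X K"
proof -
  have dense: "\<forall>n. \<exists>E. E \<subseteq> topspace X \<inter> S n \<and> subtopology X (S n) closure_of E = topspace X \<inter> S n
      \<and> |E| \<le>o |K|"
    using density unfolding density_le_def by simp
  obtain E where E: "\<And>n. E n \<subseteq> topspace X \<inter> S n"
      "\<And>n. subtopology X (S n) closure_of E n = topspace X \<inter> S n" "\<And>n. |E n| \<le>o |K|"
    using choice[OF dense] by metis
  have "topspace X \<inter> S n \<subseteq> X closure_of (\<Union>n. E n)" for n
    using closure_of_subtopology_subset[of X "S n" "E n"] closure_of_mono[of "E n" "\<Union>n. E n" X] E(2)
    by blast
  then have "topspace X \<subseteq> X closure_of (\<Union>n. E n)" using cover by blast
  then have "X closure_of (\<Union>n. E n) = topspace X"
    by (meson closure_of_subset_topspace subset_antisym)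
  moreover have "(\<Union>n. E n) \<subseteq> topspace X" using E(1) by blast
  moreover have "|\<Union>n. E n| \<le>o |K|"
    using E(3) by (rule card_of_UN_nat_ordLeq_infinite[OF \<open>infinite K\<close>])
  ultimately show ?thesis unfolding density_le_def by (intro exI[of _ "\<Union>n. E n"] conjI) assumption+
qed

lemma lindelof_le_countable_cover:
  assumes "infinite K" and cover: "topspace X \<subseteq> (\<Union>n::nat. S n)"
    and lindelof: "\<And>n. lindelof_le (subtopology X (S n)) K"
  shows "lindelof_le X K"
  unfolding lindelof_le_def
proof (intro allI impI, elim conjE)
  fix \<U> assume open_\<U>: "\<forall>U\<in>\<U>. openin X U" and cover_\<U>: "topspace X \<subseteq> \<Union>\<U>"
  have subcover: "\<forall>n. \<exists>\<V>. \<V> \<subseteq> \<U> \<and> topspace X \<inter> S n \<subseteq> \<Union>\<V> \<and> |\<V>| \<le>o |K|"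
  proof
    fix n
    have "\<forall>W\<in>(\<inter>) (S n) ` \<U>. openin (subtopology X (S n)) W"
      using open_\<U> openin_subtopology_Int2 by blast
    moreover have "topspace (subtopology X (S n)) \<subseteq> \<Union>((\<inter>) (S n) ` \<U>)"
      using cover_\<U> by auto
    ultimately obtain \<W> where \<W>: "\<W> \<subseteq> (\<inter>) (S n) ` \<U>" "topspace X \<inter> S n \<subseteq> \<Union>\<W>"
        "|\<W>| \<le>o |K|"
      using lindelof[of n, unfolded lindelof_le_def] by (metis topspace_subtopology)
    obtain \<V> where \<V>: "\<V> \<subseteq> \<U>" "inj_on ((\<inter>) (S n)) \<V>" "\<W> = (\<inter>) (S n) ` \<V>"
      using subset_image_inj[THEN iffD1, OF \<W>(1)] by blast
    have "|\<V>| \<le>o |\<W>|"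
      unfolding card_of_ordLeq[symmetric] using \<V>(2,3) by (intro exI[of _ "(\<inter>) (S n)"]) simp
    then have "|\<V>| \<le>o |K|" using \<W>(3) by (rule ordLeq_transitive)
    moreover have "topspace X \<inter> S n \<subseteq> \<Union>\<V>" using \<W>(2) \<V>(3) by blast
    ultimately show "\<exists>\<V>. \<V> \<subseteq> \<U> \<and> topspace X \<inter> S n \<subseteq> \<Union>\<V> \<and> |\<V>| \<le>o |K|"
      using \<V>(1) by (intro exI[of _ \<V>] conjI) assumption+
  qed
  obtain \<V> where "\<forall>n. \<V> n \<subseteq> \<U> \<and> topspace X \<inter> S n \<subseteq> \<Union>(\<V> n) \<and> |\<V> n| \<le>o |K|"
    using choice[OF subcover] by (rule exE)
  then have \<V>: "\<And>n. \<V> n \<subseteq> \<U>" "\<And>n. topspace X \<inter> S n \<subseteq> \<Union>(\<V> n)"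
      "\<And>n. |\<V> n| \<le>o |K|"
    by simp_all
  have "(\<Union>n. \<V> n) \<subseteq> \<U>" using \<V>(1) by blast
  moreover have "topspace X \<subseteq> \<Union>(\<Union>n. \<V> n)"
  proof
    fix x assume x: "x \<in> topspace X"
    then obtain n where "x \<in> S n" using cover by blast
    then show "x \<in> \<Union>(\<Union>n. \<V> n)" using \<V>(2)[of n] x by blast
  qed
  moreover have "|\<Union>n. \<V> n| \<le>o |K|"
    using \<V>(3) by (rule card_of_UN_nat_ordLeq_infinite[OF \<open>infinite K\<close>])
  ultimately show "\<exists>\<V>. \<V> \<subseteq> \<U> \<and> topspace X \<subseteq> \<Union>\<V> \<and> |\<V>| \<le>o |K|"
    by (intro exI[of _ "\<Union>n. \<V> n"] conjI) assumption+
qed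

lemma hd_le_countable_cover:
  assumes "infinite K" and cover: "topspace X \<subseteq> (\<Union>n::nat. S n)"
    and hd: "\<And>n. hd_le (subtopology X (S n)) K"
  shows "hd_le X K"
  unfolding hd_le_def
proof (intro allI impI)
  fix Y assume "Y \<subseteq> topspace X"
  have "density_le (subtopology (subtopology X Y) (S n)) K" for n
    using hd[of n, unfolded hd_le_def, rule_format, of "Y \<inter> S n"] \<open>Y \<subseteq> topspace X\<close>
    by (auto simp: subtopology_subtopology Int_ac)
  moreover have "topspace (subtopology X Y) \<subseteq> (\<Union>n. S n)" using cover by auto
  ultimately show "density_le (subtopology X Y) K"
    using density_le_countable_cover[OF \<open>infinite K\<close>] by blast
qed

lemma hL_le_countable_cover:
  assumes "infinite K" and cover: "topspace X \<subseteq> (\<Union>n::nat. S n)"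
    and hL: "\<And>n. hL_le (subtopology X (S n)) K"
  shows "hL_le X K"
  unfolding hL_le_def
proof (intro allI impI)
  fix Y assume "Y \<subseteq> topspace X"
  have "lindelof_le (subtopology (subtopology X Y) (S n)) K" for n
    using hL[of n, unfolded hL_le_def, rule_format, of "Y \<inter> S n"] \<open>Y \<subseteq> topspace X\<close>
    by (auto simp: subtopology_subtopology Int_ac)
  moreover have "topspace (subtopology X Y) \<subseteq> (\<Union>n. S n)" using cover by auto
  ultimately show "lindelof_le (subtopology X Y) K"
    using lindelof_le_countable_cover[OF \<open>infinite K\<close>] by blast
qed

lemma topspace_weak_star_topology [simp]: "topspace weak_star_topology = UNIV"
proof -
  have "f \<in> {g. blinfun_apply g 0 \<in> {-1<..<1}}" for f :: "'a::real_normed_vector \<Rightarrow>\<^sub>L real"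
    by simp
  then show ?thesis unfolding weak_star_topology_def topology_generated_by_topspace by blast
qed

lemma openin_weak_star_topology_evaluation:
  "openin weak_star_topology {f. blinfun_apply f x \<in> {a<..<b}}"
  unfolding weak_star_topology_def by (rule topology_generated_by_Basis) blast

lemma continuous_map_weak_star_scaleR:
  "continuous_map weak_star_topology weak_star_topology (\<lambda>f::'a::real_normed_vector \<Rightarrow>\<^sub>L real. c *\<^sub>R f)"
proof -
  have "openin weak_star_topology ((\<lambda>f::'a \<Rightarrow>\<^sub>L real. c *\<^sub>R f) -` {f. blinfun_apply f x \<in> {a<..<b}})"
    for x a b
  proof -
    have "(\<lambda>f::'a \<Rightarrow>\<^sub>L real. c *\<^sub>R f) -` {f. blinfun_apply f x \<in> {a<..<b}}
        = {f. blinfun_apply f (c *\<^sub>R x) \<in> {a<..<b}}"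
      by (auto simp: blinfun.scaleR_right scaleR_blinfun.rep_eq)
    then show ?thesis using openin_weak_star_topology_evaluation by metis
  qed
  then show ?thesis
    using topspace_weak_star_topology[where 'a='a]
    unfolding weak_star_topology_def
    by (intro continuous_on_generated_topo) (auto simp: weak_star_topology_def)
qed

lemma weak_star_covered_by_scaled_dual_balls:
  "topspace (weak_star_topology :: ('a::real_normed_vector \<Rightarrow>\<^sub>L real) topology)
     \<subseteq> (\<Union>n::nat. (\<lambda>f. real (Suc n) *\<^sub>R f) ` dual_ball)"
proof -
  have scaled: "f \<in> (\<lambda>f. real (Suc n) *\<^sub>R f) ` dual_ball" if "norm f \<le> real (Suc n)"
    for n and f :: "'a \<Rightarrow>\<^sub>L real"
  proof
    show "f = real (Suc n) *\<^sub>R ((1 / real (Suc n)) *\<^sub>R f)" by simp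
    show "(1 / real (Suc n)) *\<^sub>R f \<in> dual_ball"
      using that unfolding dual_ball_def by (simp add: field_simps)
  qed
  show ?thesis
  proof
    fix f :: "'a \<Rightarrow>\<^sub>L real"
    obtain n where "norm f \<le> real (Suc n)" by (metis le_SucI nat_ceiling_le_eq order.refl)
    then have "f \<in> (\<lambda>f. real (Suc n) *\<^sub>R f) ` dual_ball" by (rule scaled)
    then show "f \<in> (\<Union>n. (\<lambda>f. real (Suc n) *\<^sub>R f) ` dual_ball)" by blast
  qed
qed

lemma continuous_map_scaleR_dual_ball:
  shows "continuous_map (subtopology weak_star_topology dual_ball)
           (subtopology weak_star_topology ((\<lambda>f. c *\<^sub>R f) ` dual_ball))
           (\<lambda>f::'a::real_normed_vector \<Rightarrow>\<^sub>L real. c *\<^sub>R f)"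
    and "(\<lambda>f. c *\<^sub>R f) ` topspace (subtopology weak_star_topology dual_ball)
           = topspace (subtopology weak_star_topology ((\<lambda>f::'a \<Rightarrow>\<^sub>L real. c *\<^sub>R f) ` dual_ball))"
  by (auto simp: continuous_map_in_subtopology continuous_map_from_subtopology
      continuous_map_weak_star_scaleR)

lemma dual_ball_infinite_discrete:
  fixes f0 :: "'a::real_normed_vector \<Rightarrow>\<^sub>L real"
  assumes "f0 \<noteq> 0"
  obtains D :: "('a \<Rightarrow>\<^sub>L real) set"
  where "discrete_in (subtopology weak_star_topology dual_ball) D" and "infinite D"
proof -
  obtain x0 where "f0 x0 \<noteq> 0" using assms by (metis blinfun_eqI zero_blinfun.rep_eq)
  define u where "u = (norm f0 / f0 x0) *\<^sub>R x0"
  define d where "d k = (1 / (norm f0 * real (Suc k))) *\<^sub>R f0" for k :: nat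
  have "norm f0 > 0" using assms by simp
  then have d_u: "d k u = 1 / real (Suc k)" for k
    using \<open>f0 x0 \<noteq> 0\<close> by (simp add: d_def u_def blinfun.scaleR_right scaleR_blinfun.rep_eq)
  have "inj d"
    by (rule injI) (metis d_u nat.inject of_nat_eq_iff divide_cancel_left one_neq_zero)
  have d_ball: "range d \<subseteq> dual_ball"
    using \<open>norm f0 > 0\<close> by (auto simp: dual_ball_def d_def divide_simps)
  have "openin (subtopology weak_star_topology (range d)) {d k}" for k
  proof -
    let ?U = "{f. blinfun_apply f u \<in> {1 / (real k + 2) <..< 1 / (real k + 1/2)}}"
    have in_U: "d m \<in> ?U \<longleftrightarrow> m = k" for m
    proof -
      have "d m \<in> ?U \<longleftrightarrow> real k + 1/2 < real (Suc m) \<and> real (Suc m) < real k + 2"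
        by (simp add: d_u divide_simps) (simp add: mult.commute conj_commute)
      also have "\<dots> \<longleftrightarrow> m = k" by linarith
      finally show ?thesis .
    qed
    have "{d k} = ?U \<inter> range d"
    proof
      show "{d k} \<subseteq> ?U \<inter> range d" using in_U[of k] by blast
      show "?U \<inter> range d \<subseteq> {d k}"
      proof (rule subsetI, elim IntE rangeE)
        fix f m assume "f \<in> ?U" "f = d m"
        then show "f \<in> {d k}" using in_U[of m] by simp
      qed
    qed
    then show ?thesis
      unfolding openin_subtopology using openin_weak_star_topology_evaluation by blast
  qed
  then have "discrete_in (subtopology weak_star_topology dual_ball) (range d)"
    using d_ball by (auto simp: discrete_in_def subtopology_subtopology Int_absorb1)
  moreover have "infinite (range d)" using \<open>inj d\<close> by (simp add: range_inj_infinite)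
  ultimately show thesis by (rule that)
qed

lemma subtopology_dual_ball_eq_if_finite_spread:
  assumes "finite K"
    and "spread_le (subtopology weak_star_topology (dual_ball :: ('a::real_normed_vector \<Rightarrow>\<^sub>L real) set)) K"
  shows "subtopology weak_star_topology (dual_ball :: ('a \<Rightarrow>\<^sub>L real) set) = weak_star_topology"
proof (cases "\<exists>f0 :: 'a \<Rightarrow>\<^sub>L real. f0 \<noteq> 0")
  case True
  then obtain D :: "('a \<Rightarrow>\<^sub>L real) set"
    where "discrete_in (subtopology weak_star_topology dual_ball) D" "infinite D"
    using dual_ball_infinite_discrete by metis
  then have "|D| \<le>o |K|" using assms(2) unfolding spread_le_def by simp
  then have "finite D" using \<open>finite K\<close> by (rule card_of_ordLeq_finite)
  then show ?thesis using \<open>infinite D\<close> by contradiction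
next
  case False
  then have zero: "f = 0" for f :: "'a \<Rightarrow>\<^sub>L real" by blast
  have "f \<in> dual_ball" for f :: "'a \<Rightarrow>\<^sub>L real" using zero[of f] by (simp add: dual_ball_def)
  then have "dual_ball = (UNIV :: ('a \<Rightarrow>\<^sub>L real) set)" by blast
  then show ?thesis by simp
qed

lemma cardinal_bound_weak_star_iff_dual_ball:
  fixes \<psi> :: "('a::real_normed_vector \<Rightarrow>\<^sub>L real) topology \<Rightarrow> 'b set \<Rightarrow> bool"
  assumes subtopology: "\<And>T S. \<psi> T K \<Longrightarrow> \<psi> (subtopology T S) K"
    and spread: "\<And>T. \<psi> T K \<Longrightarrow> spread_le T K"
    and scaleR: "\<And>n::nat. \<psi> (subtopology weak_star_topology dual_ball) K
        \<Longrightarrow> \<psi> (subtopology weak_star_topology ((\<lambda>f. real (Suc n) *\<^sub>R f) ` dual_ball)) K"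
    and countable_cover: "\<And>S. infinite K \<Longrightarrow> topspace weak_star_topology \<subseteq> (\<Union>n::nat. S n)
        \<Longrightarrow> (\<And>n. \<psi> (subtopology weak_star_topology (S n)) K) \<Longrightarrow> \<psi> weak_star_topology K"
  shows "\<psi> weak_star_topology K \<longleftrightarrow> \<psi> (subtopology weak_star_topology dual_ball) K"
proof
  assume ball: "\<psi> (subtopology weak_star_topology dual_ball) K"
  show "\<psi> weak_star_topology K"
  proof (cases "finite K")
    case True
    then have "subtopology weak_star_topology (dual_ball :: ('a \<Rightarrow>\<^sub>L real) set) = weak_star_topology"
      using spread[OF ball] by (rule subtopology_dual_ball_eq_if_finite_spread)
    then show ?thesis using ball by simp
  next
    case False
    show ?thesis
      by (rule countable_cover[OF False weak_star_covered_by_scaled_dual_balls scaleR])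
        (simp_all add: ball)
  qed
qed (rule subtopology)

lemma spread_le_weak_star_iff_dual_ball:
  "spread_le (weak_star_topology :: ('a::real_normed_vector \<Rightarrow>\<^sub>L real) topology) K
     \<longleftrightarrow> spread_le (subtopology weak_star_topology (dual_ball :: ('a \<Rightarrow>\<^sub>L real) set)) K"
proof (rule cardinal_bound_weak_star_iff_dual_ball[where \<psi>=spread_le,
      OF spread_le_subtopology _ _ spread_le_countable_cover])
  fix n :: nat
  assume ball: "spread_le (subtopology weak_star_topology (dual_ball :: ('a \<Rightarrow>\<^sub>L real) set)) K"
  show "spread_le (subtopology weak_star_topology
      ((\<lambda>f. real (Suc n) *\<^sub>R f) ` (dual_ball :: ('a \<Rightarrow>\<^sub>L real) set))) K"
    by (rule spread_le_continuous_bijective_image[OF continuous_map_scaleR_dual_ball(1) _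
        continuous_map_scaleR_dual_ball(2) ball]) (simp add: inj_on_def)
qed

lemma hd_le_weak_star_iff_dual_ball:
  "hd_le (weak_star_topology :: ('a::real_normed_vector \<Rightarrow>\<^sub>L real) topology) K
     \<longleftrightarrow> hd_le (subtopology weak_star_topology (dual_ball :: ('a \<Rightarrow>\<^sub>L real) set)) K"
  by (rule cardinal_bound_weak_star_iff_dual_ball[where \<psi>=hd_le,
        OF hd_le_subtopology hd_le_imp_spread_le
           hd_le_continuous_image[OF continuous_map_scaleR_dual_ball] hd_le_countable_cover])

lemma hL_le_weak_star_iff_dual_ball:
  "hL_le (weak_star_topology :: ('a::real_normed_vector \<Rightarrow>\<^sub>L real) topology) K
     \<longleftrightarrow> hL_le (subtopology weak_star_topology (dual_ball :: ('a \<Rightarrow>\<^sub>L real) set)) K"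
  by (rule cardinal_bound_weak_star_iff_dual_ball[where \<psi>=hL_le,
        OF hL_le_subtopology hL_le_imp_spread_le
           hL_le_continuous_image[OF continuous_map_scaleR_dual_ball] hL_le_countable_cover])

theorem mainTheorem1:
  fixes X :: "'a::banach itself"
  assumes "infinite_dimensional X"
  shows "(\<forall>K::'b set. spread_le (weak_star_topology :: ('a \<Rightarrow>\<^sub>L real) topology) K
              \<longleftrightarrow> spread_le (subtopology weak_star_topology (dual_ball :: ('a \<Rightarrow>\<^sub>L real) set)) K)
       \<and> (\<forall>K::'b set. hL_le (weak_star_topology :: ('a \<Rightarrow>\<^sub>L real) topology) K
              \<longleftrightarrow> hL_le (subtopology weak_star_topology (dual_ball :: ('a \<Rightarrow>\<^sub>L real) set)) K)
       \<and> (\<forall>K::'b set. hd_le (weak_star_topology :: ('a \<Rightarrow>\<^sub>L real) topology) K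
              \<longleftrightarrow> hd_le (subtopology weak_star_topology (dual_ball :: ('a \<Rightarrow>\<^sub>L real) set)) K)"
  using spread_le_weak_star_iff_dual_ball hL_le_weak_star_iff_dual_ball hd_le_weak_star_iff_dual_ball
  by (intro conjI allI) assumption+

end
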